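(* Let \(A\) be a geometrically fast set of positive bumps with a fixed marking witnessing this. Suppose \(x_0,x_1\in I\) and for each \(i<2\), \(\mathtt{u}_i\) is an \(A\)-word locally reduced at \(x_i\) with \(x_i\notin\operatorname{src}(\mathtt{u}_i)\). If \(|\mathtt{u}_0|\le|\mathtt{u}_1|\) and \(x_0u_0=x_1u_1\), then \(\mathtt{u}_0\) is a suffix of \(\mathtt{u}_1\). In particular, if \(t\in I\) lies in none of the feet of elements of \(A^{\pm}\), and \(\mathtt{u}\), \(\mathtt{v}\) are \(A\)-words locally reduced at \(t\) with \(tu=tv\), then \(\mathtt{u}=\mathtt{v}\).
   Context: \(I=[0,1]\); homeomorphisms act on the right. A positive bump is an element of \(\operatorname{Homeo}_+(I)\) whose support \(\{t:ta\neq t\}\) is a single open interval \((x,y)\) on which \(ta>t\); \(x\), \(y\) are its left and right transition points. \(A\) is geometrically proper if no point is a left transition point of two distinct elements, nor a right transition point of two distinct elements. A marking assigns each \(a\in A\) a marker \(t\in\operatorname{supt}(a)\); for \(a\) with support \((x,y)\), \(\operatorname{src}(a)=(x,t)\), \(\operatorname{dest}(a)=[ta,y)\), \(\operatorname{src}(a^{-1})=\operatorname{dest}(a)\), \(\operatorname{dest}(a^{-1})=\operatorname{src}(a)\); these are the feet. \(A\) is geometrically fast if geometrically proper and the marking makes the feet pairwise disjoint. \(A^{\pm}=A\cup A^{-1}\). An \(A\)-word is a finite string over \(A^{\pm}\); \(|\mathtt{u}|\) is its length, \(u\) its evaluation (acting on the right). \(\mathtt{w}\) is locally reduced at \(t\)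 if it is freely reduced and for every prefix \(\mathtt{ua}\) (\(a\in A^\pm\)), \(tua\neq tu\). For a nonempty word, \(\operatorname{src}(\mathtt{w})\) is the source of its first symbol; \(\operatorname{src}(\varepsilon)=\emptyset\). *)

theory Defs
  imports "HOL-Analysis.Analysis"
begin

text \<open>Elements of Homeo_+(I) are represented as functions real => real restricted to I = [0,1].
  Homeomorphisms act on the right: t a is written a t.\<close>

definition homeo_plus :: "(real \<Rightarrow> real) \<Rightarrow> bool" where
  "homeo_plus f \<longleftrightarrow> (\<exists>g. homeomorphism {0..1} {0..1} f g) \<and> strict_mono_on {0..1} f"

definition supt :: "(real \<Rightarrow> real) \<Rightarrow> real set" where
  "supt f = {t \<in> {0..1}. f t \<noteq> t}"

definition positive_bump :: "(real \<Rightarrow> real) \<Rightarrow> bool" where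
  "positive_bump f \<longleftrightarrow> homeo_plus f \<and>
     (\<exists>x y. x < y \<and> supt f = {x<..<y}) \<and> (\<forall>t\<in>supt f. f t > t)"

definition ltp :: "(real \<Rightarrow> real) \<Rightarrow> real" where
  "ltp f = Inf (supt f)"

definition rtp :: "(real \<Rightarrow> real) \<Rightarrow> real" where
  "rtp f = Sup (supt f)"

definition geom_proper :: "(real \<Rightarrow> real) set \<Rightarrow> bool" where
  "geom_proper A \<longleftrightarrow> (\<forall>a\<in>A. \<forall>b\<in>A. ltp a = ltp b \<longrightarrow> a = b) \<and>
                       (\<forall>a\<in>A. \<forall>b\<in>A. rtp a = rtp b \<longrightarrow> a = b)"

definition src_b :: "((real \<Rightarrow> real) \<Rightarrow> real) \<Rightarrow> (real \<Rightarrow> real) \<Rightarrow> real set" where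
  "src_b m a = {ltp a<..<m a}"

definition dest_b :: "((real \<Rightarrow> real) \<Rightarrow> real) \<Rightarrow> (real \<Rightarrow> real) \<Rightarrow> real set" where
  "dest_b m a = {a (m a)..<rtp a}"

definition is_marking :: "(real \<Rightarrow> real) set \<Rightarrow> ((real \<Rightarrow> real) \<Rightarrow> real) \<Rightarrow> bool" where
  "is_marking A m \<longleftrightarrow> (\<forall>a\<in>A. m a \<in> supt a)"

text \<open>The feet are src(a), dest(a) for a in A (src(a^-1) = dest(a), dest(a^-1) = src(a));
  the family of feet indexed by the symbols of A^\<pm> and their source/destination is pairwise disjoint.\<close>
definition geom_fast :: "(real \<Rightarrow> real) set \<Rightarrow> ((real \<Rightarrow> real) \<Rightarrow> real) \<Rightarrow> bool" where
  "geom_fast A m \<longleftrightarrow> (\<forall>a\<in>A. positive_bump a) \<and> geom_proper A \<and> is_marking A m \<and>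
     (\<forall>a\<in>A. src_b m a \<inter> dest_b m a = {}) \<and>
     (\<forall>a\<in>A. \<forall>b\<in>A. a \<noteq> b \<longrightarrow>
        (src_b m a \<union> dest_b m a) \<inter> (src_b m b \<union> dest_b m b) = {})"

text \<open>Symbols of A^\<pm>: (a, True) stands for a, (a, False) for a^-1.\<close>
type_synonym sym = "(real \<Rightarrow> real) \<times> bool"

definition act :: "sym \<Rightarrow> real \<Rightarrow> real" where
  "act s t = (if snd s then fst s t else inv_into {0..1} (fst s) t)"

fun evalw :: "real \<Rightarrow> sym list \<Rightarrow> real" where
  "evalw t [] = t"
| "evalw t (s # w) = evalw (act s t) w"

definition is_word :: "(real \<Rightarrow> real) set \<Rightarrow> sym list \<Rightarrow> bool" where
  "is_word A w \<longleftrightarrow> (\<forall>s\<in>set w. fst s \<in> A)"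

definition freely_reduced :: "sym list \<Rightarrow> bool" where
  "freely_reduced w \<longleftrightarrow> (\<forall>i. Suc i < length w \<longrightarrow>
      \<not> (fst (w ! i) = fst (w ! Suc i) \<and> snd (w ! i) \<noteq> snd (w ! Suc i)))"

definition locally_reduced :: "real \<Rightarrow> sym list \<Rightarrow> bool" where
  "locally_reduced t w \<longleftrightarrow> freely_reduced w \<and>
     (\<forall>u s v. w = u @ [s] @ v \<longrightarrow> evalw t (u @ [s]) \<noteq> evalw t u)"

definition src_sym :: "((real \<Rightarrow> real) \<Rightarrow> real) \<Rightarrow> sym \<Rightarrow> real set" where
  "src_sym m s = (if snd s then src_b m (fst s) else dest_b m (fst s))"

definition src_word :: "((real \<Rightarrow> real) \<Rightarrow> real) \<Rightarrow> sym list \<Rightarrow> real set" where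
  "src_word m w = (case w of [] \<Rightarrow> {} | s # _ \<Rightarrow> src_sym m s)"

definition feet :: "(real \<Rightarrow> real) set \<Rightarrow> ((real \<Rightarrow> real) \<Rightarrow> real) \<Rightarrow> real set set" where
  "feet A m = {src_b m a | a. a \<in> A} \<union> {dest_b m a | a. a \<in> A}"

end

theory Submission
  imports Defs
begin

text \<open>Ping-pong: if a nonempty word w, locally reduced at x, does not start in the source of its
  first letter, then x w lies in the destination of its last letter. Each letter really moves the
  point, and a bump moving a point outside its source throws it into its destination, which is
  disjoint from every source the next (non-cancelling) letter could have. Comparing the last
  letters of two words through their common image and cancelling them gives the suffix property;
  a point outside all feet cannot be fixed by a nonempty such word, which gives uniqueness.\<close>

lemma positive_bumpE:
  assumes "positive_bump a"
  obtains x y where "supt a = {x<..<y}" "ltp a = x" "rtp a = y" "y \<in> {0..1}" "a y = y"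
    "strict_mono_on {0..1} a" "{x<..<y} \<subseteq> {0..1}"
proof -
  from assms obtain x y where xy: "x < y" "supt a = {x<..<y}"
    and "strict_mono_on {0..1} a"
    unfolding positive_bump_def homeo_plus_def by blast
  moreover have sub: "{x<..<y} \<subseteq> {0..1}"
    using xy(2) unfolding supt_def by blast
  moreover have "y \<in> {0..1}"
    using sub xy(1) by (simp add: greaterThanLessThan_subseteq_atLeastAtMost_iff)
  moreover have "a y = y"
    using xy(2) \<open>y \<in> {0..1}\<close> unfolding supt_def by auto
  ultimately show ?thesis
    using that by (simp add: ltp_def rtp_def)
qed

lemma positive_bump_bij_betw:
  assumes "positive_bump a"
  shows "bij_betw a {0..1} {0..1}"
proof -
  from assms obtain g where "homeomorphism {0..1} {0..1} a g" "strict_mono_on {0..1} a"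
    unfolding positive_bump_def homeo_plus_def by blast
  then show ?thesis
    by (simp add: bij_betw_def homeomorphism_def strict_mono_on_imp_inj_on)
qed

lemma act_bij_betw:
  assumes "positive_bump (fst \<sigma>)"
  shows "bij_betw (act \<sigma>) {0..1} {0..1}"
  using positive_bump_bij_betw[OF assms] bij_betw_inv_into
  by (cases "snd \<sigma>") (simp_all add: act_def[abs_def])

lemma evalw_append: "evalw t (u @ v) = evalw (evalw t u) v"
  by (induction u arbitrary: t) auto

lemma evalw_bij_betw:
  assumes "\<forall>a\<in>A. positive_bump a" "is_word A w"
  shows "bij_betw (\<lambda>t. evalw t w) {0..1} {0..1}"
  using assms(2)
proof (induction w)
  case Nil
  then show ?case by (simp add: bij_betw_def)
next
  case (Cons \<sigma> w)
  then have "bij_betw ((\<lambda>t. evalw t w) \<circ> act \<sigma>) {0..1} {0..1}"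
    using assms(1) act_bij_betw by (intro bij_betw_trans) (auto simp: is_word_def)
  then show ?case
    by (simp add: comp_def)
qed

lemma evalw_in_unit:
  assumes "\<forall>a\<in>A. positive_bump a" "is_word A w" "t \<in> {0..1}"
  shows "evalw t w \<in> {0..1}"
  using bij_betw_apply[OF evalw_bij_betw[OF assms(1,2)] assms(3)] .

lemma evalw_inj_on:
  assumes "\<forall>a\<in>A. positive_bump a" "is_word A w"
  shows "inj_on (\<lambda>t. evalw t w) {0..1}"
  using bij_betw_imp_inj_on[OF evalw_bij_betw[OF assms]] .

definition dest_sym :: "((real \<Rightarrow> real) \<Rightarrow> real) \<Rightarrow> sym \<Rightarrow> real set" where
  "dest_sym m s = (if snd s then dest_b m (fst s) else src_b m (fst s))"

definition inv_sym :: "sym \<Rightarrow> sym" where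
  "inv_sym s = (fst s, \<not> snd s)"

lemma src_sym_eq_dest_sym_inv: "src_sym m s = dest_sym m (inv_sym s)"
  by (simp add: src_sym_def dest_sym_def inv_sym_def)

lemma bump_moves_into_dest:
  assumes "positive_bump a" "m a \<in> supt a" "s \<in> {0..1}" "a s \<noteq> s" "s \<notin> src_b m a"
  shows "a s \<in> dest_b m a"
proof -
  obtain x y where supt: "supt a = {x<..<y}" and "ltp a = x" "rtp a = y" "y \<in> {0..1}" "a y = y"
    and mono: "strict_mono_on {0..1} a" and sub: "{x<..<y} \<subseteq> {0..1}"
    using positive_bumpE[OF assms(1)] by blast
  have s: "s \<in> {x<..<y}"
    using assms(3,4) supt unfolding supt_def by blast
  with assms(5) \<open>ltp a = x\<close> have "m a \<le> s"
    by (auto simp: src_b_def)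
  moreover have "m a \<in> {0..1}"
    using assms(2) supt sub by blast
  ultimately have "a (m a) \<le> a s"
    using assms(3) mono by (simp add: strict_mono_on_leD)
  moreover have "a s < a y"
    using s sub \<open>y \<in> {0..1}\<close> by (intro strict_mono_onD[OF mono]) auto
  ultimately show ?thesis
    using \<open>rtp a = y\<close> \<open>a y = y\<close> by (simp add: dest_b_def)
qed

lemma act_moves_into_dest_sym:
  assumes "positive_bump (fst \<sigma>)" "m (fst \<sigma>) \<in> supt (fst \<sigma>)" "s \<in> {0..1}"
    "act \<sigma> s \<noteq> s" "s \<notin> src_sym m \<sigma>"
  shows "act \<sigma> s \<in> dest_sym m \<sigma>"
proof (cases "snd \<sigma>")
  case True
  then show ?thesis
    using bump_moves_into_dest[of "fst \<sigma>" m s] assms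
    by (simp add: act_def dest_sym_def src_sym_def)
next
  case False
  let ?a = "fst \<sigma>" and ?r = "inv_into {0..1} (fst \<sigma>) s"
  have r: "?r \<in> {0..1}" "?a ?r = s"
    using bij_betw_apply[OF bij_betw_inv_into] bij_betw_inv_into_right
      positive_bump_bij_betw[OF assms(1)] assms(3) by metis+
  \<comment> \<open>the inverse letter is handled by applying the forward case at the preimage\<close>
  have "?r \<in> src_b m ?a"
    using bump_moves_into_dest[of ?a m ?r] assms(1,2,4,5) r False
    by (auto simp: act_def src_sym_def)
  with False show ?thesis
    by (simp add: act_def dest_sym_def)
qed

lemma dest_sym_meet_imp_eq:
  assumes "geom_fast A m" "fst \<sigma> \<in> A" "fst \<tau> \<in> A"
    "z \<in> dest_sym m \<sigma>" "z \<in> dest_sym m \<tau>"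
  shows "\<sigma> = \<tau>"
proof -
  have feet: "dest_sym m \<rho> \<subseteq> src_b m (fst \<rho>) \<union> dest_b m (fst \<rho>)" for \<rho>
    by (auto simp: dest_sym_def)
  have "fst \<sigma> = fst \<tau>"
    using assms feet unfolding geom_fast_def by blast
  moreover have "src_b m (fst \<sigma>) \<inter> dest_b m (fst \<sigma>) = {}"
    using assms(1,2) unfolding geom_fast_def by blast
  ultimately have "snd \<sigma> = snd \<tau>"
    using assms(4,5) unfolding dest_sym_def by (auto split: if_splits)
  with \<open>fst \<sigma> = fst \<tau>\<close> show ?thesis
    by (simp add: prod_eq_iff)
qed

lemma locally_reduced_prefix:
  assumes "locally_reduced t (u @ v)"
  shows "locally_reduced t u"
proof -
  have "freely_reduced u"
    unfolding freely_reduced_def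
  proof (intro allI impI)
    fix i
    assume "Suc i < length u"
    then show "\<not> (fst (u ! i) = fst (u ! Suc i) \<and> snd (u ! i) \<noteq> snd (u ! Suc i))"
      using assms unfolding locally_reduced_def freely_reduced_def
      by (auto simp: nth_append dest!: spec[of _ i])
  qed
  then show ?thesis
    using assms unfolding locally_reduced_def by (metis append.assoc)
qed

lemma freely_reduced_snoc_last:
  assumes "freely_reduced (w @ [\<sigma>])" "w \<noteq> []"
  shows "last w \<noteq> inv_sym \<sigma>"
proof -
  have "Suc (length w - 1) < length (w @ [\<sigma>])"
    "(w @ [\<sigma>]) ! (length w - 1) = last w" "(w @ [\<sigma>]) ! Suc (length w - 1) = \<sigma>"
    using assms(2) by (simp_all add: nth_append last_conv_nth)
  then have "\<not> (fst (last w) = fst \<sigma> \<and> snd (last w) \<noteq> snd \<sigma>)"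
    using assms(1) unfolding freely_reduced_def by metis
  then show ?thesis
    by (auto simp: inv_sym_def)
qed

lemma locally_reduced_snoc_moves:
  assumes "locally_reduced x (w @ [\<sigma>])"
  shows "act \<sigma> (evalw x w) \<noteq> evalw x w"
  using assms[unfolded locally_reduced_def, THEN conjunct2, rule_format, of w \<sigma> "[]"]
  by (simp add: evalw_append)

lemma src_word_prefix_subset: "src_word m u \<subseteq> src_word m (u @ v)"
  by (cases u) (auto simp: src_word_def)

lemma evalw_in_dest_last:
  assumes gf: "geom_fast A m"
  shows "w \<noteq> [] \<Longrightarrow> locally_reduced x w \<Longrightarrow> x \<in> {0..1} \<Longrightarrow> is_word A w \<Longrightarrow>
    x \<notin> src_word m w \<Longrightarrow> evalw x w \<in> dest_sym m (last w)"
proof (induction w rule: rev_induct)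
  case Nil
  then show ?case by simp
next
  case (snoc \<sigma> w)
  have bumps: "\<forall>a\<in>A. positive_bump a" and "is_marking A m"
    using gf by (auto simp: geom_fast_def)
  have \<sigma>: "fst \<sigma> \<in> A" and w: "is_word A w"
    using snoc.prems(4) by (auto simp: is_word_def)
  have "evalw x w \<notin> src_sym m \<sigma>"
  proof (cases "w = []")
    case True
    then show ?thesis using snoc.prems(5) by (simp add: src_word_def)
  next
    case False
    have "evalw x w \<in> dest_sym m (last w)"
      using snoc.IH[OF False locally_reduced_prefix[OF snoc.prems(2)] snoc.prems(3) w]
        snoc.prems(5) src_word_prefix_subset by blast
    moreover have "last w \<noteq> inv_sym \<sigma>"
      using freely_reduced_snoc_last[OF _ False] snoc.prems(2) by (simp add: locally_reduced_def)
    moreover have "fst (last w) \<in> A" "fst (inv_sym \<sigma>) \<in> A"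
      using False w \<sigma> by (auto simp: is_word_def inv_sym_def)
    ultimately show ?thesis
      using dest_sym_meet_imp_eq[OF gf] unfolding src_sym_eq_dest_sym_inv by blast
  qed
  then show ?case
    using act_moves_into_dest_sym[of \<sigma> m "evalw x w"] bumps \<open>is_marking A m\<close> \<sigma>
      evalw_in_unit[OF bumps w snoc.prems(3)] locally_reduced_snoc_moves[OF snoc.prems(2)]
    by (auto simp: is_marking_def evalw_append)
qed

lemma locally_reduced_same_image_suffix:
  assumes gf: "geom_fast A m"
  shows "x0 \<in> {0..1} \<Longrightarrow> x1 \<in> {0..1} \<Longrightarrow> is_word A u0 \<Longrightarrow> is_word A u1 \<Longrightarrow>
    locally_reduced x0 u0 \<Longrightarrow> locally_reduced x1 u1 \<Longrightarrow>
    x0 \<notin> src_word m u0 \<Longrightarrow> x1 \<notin> src_word m u1 \<Longrightarrow>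
    length u0 \<le> length u1 \<Longrightarrow> evalw x0 u0 = evalw x1 u1 \<Longrightarrow> \<exists>p. u1 = p @ u0"
proof (induction u0 arbitrary: u1 rule: rev_induct)
  case Nil
  then show ?case by simp
next
  case (snoc \<sigma> u0)
  have bumps: "\<forall>a\<in>A. positive_bump a"
    using gf by (auto simp: geom_fast_def)
  obtain u1' \<tau> where u1: "u1 = u1' @ [\<tau>]"
    using snoc.prems(9) by (cases u1 rule: rev_cases) auto
  have w0: "is_word A u0" and w1: "is_word A u1'" and "fst \<sigma> \<in> A" "fst \<tau> \<in> A"
    using snoc.prems(3,4) u1 by (auto simp: is_word_def)
  have "\<sigma> = \<tau>"
    using dest_sym_meet_imp_eq[OF gf \<open>fst \<sigma> \<in> A\<close> \<open>fst \<tau> \<in> A\<close>]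
      evalw_in_dest_last[OF gf, of "u0 @ [\<sigma>]" x0] evalw_in_dest_last[OF gf, of u1 x1]
      snoc.prems u1 by simp
  then have "evalw x0 (u0 @ [\<sigma>]) = evalw (evalw x1 u1') [\<sigma>]"
    using snoc.prems(10) u1 by (simp add: evalw_append)
  then have same_image: "evalw x0 u0 = evalw x1 u1'"
    using inj_onD[OF evalw_inj_on[OF bumps, of "[\<sigma>]"]] \<open>fst \<sigma> \<in> A\<close>
      evalw_in_unit[OF bumps w0 snoc.prems(1)] evalw_in_unit[OF bumps w1 snoc.prems(2)]
    by (simp add: evalw_append is_word_def)
  have "x0 \<notin> src_word m u0" "x1 \<notin> src_word m u1'"
    using snoc.prems(7,8) u1 src_word_prefix_subset by blast+
  moreover have "length u0 \<le> length u1'"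
    using snoc.prems(9) u1 by simp
  ultimately obtain p where "u1' = p @ u0"
    using snoc.IH[OF snoc.prems(1,2) w0 w1 locally_reduced_prefix[OF snoc.prems(5)]
        locally_reduced_prefix[of x1 u1' "[\<tau>]"] _ _ _ same_image] snoc.prems(6) u1 by blast
  then show ?case
    using u1 \<open>\<sigma> = \<tau>\<close> by simp
qed

lemma locally_reduced_same_image_eq:
  assumes gf: "geom_fast A m" and t: "t \<in> {0..1}" and off_feet: "\<forall>F\<in>feet A m. t \<notin> F"
    and wu: "is_word A u" and wv: "is_word A v"
    and "locally_reduced t u" "locally_reduced t v" "evalw t u = evalw t v"
    and "length u \<le> length v"
  shows "u = v"
proof -
  have bumps: "\<forall>a\<in>A. positive_bump a"
    using gf by (auto simp: geom_fast_def)
  have not_src: "t \<notin> src_word m w" if "is_word A w" for w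
    using off_feet that
    by (cases w) (auto simp: src_word_def src_sym_def feet_def is_word_def)
  obtain p where v: "v = p @ u"
    using locally_reduced_same_image_suffix[OF gf t t wu wv] assms(6-9) not_src wu wv by blast
  have wp: "is_word A p"
    using wv v by (auto simp: is_word_def)
  have "evalw (evalw t p) u = evalw t u"
    using assms(8) v by (simp add: evalw_append)
  then have fixed: "evalw t p = t"
    using inj_onD[OF evalw_inj_on[OF bumps wu]] evalw_in_unit[OF bumps wp t] t by blast
  show ?thesis
  proof (rule ccontr)
    assume "u \<noteq> v"
    then have "p \<noteq> []" using v by auto
    moreover have "locally_reduced t p"
      using locally_reduced_prefix assms(7) v by blast
    moreover have "t \<notin> src_word m p"
      using not_src[OF wv] src_word_prefix_subset v by blast
    ultimately have "t \<in> dest_sym m (last p)"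
      using evalw_in_dest_last[OF gf _ _ t wp] fixed by metis
    moreover have "fst (last p) \<in> A"
      using wp \<open>p \<noteq> []\<close> by (auto simp: is_word_def)
    ultimately show False
      using off_feet by (auto simp: dest_sym_def feet_def split: if_splits)
  qed
qed

theorem lemma5p4:
  fixes A :: "(real \<Rightarrow> real) set" and m :: "(real \<Rightarrow> real) \<Rightarrow> real"
  assumes "geom_fast A m"
  shows "(\<forall>x0 x1 u0 u1.
            x0 \<in> {0..1} \<and> x1 \<in> {0..1} \<and> is_word A u0 \<and> is_word A u1 \<and>
            locally_reduced x0 u0 \<and> locally_reduced x1 u1 \<and>
            x0 \<notin> src_word m u0 \<and> x1 \<notin> src_word m u1 \<and>
            length u0 \<le> length u1 \<and> evalw x0 u0 = evalw x1 u1
            \<longrightarrow> (\<exists>p. u1 = p @ u0))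
       \<and> (\<forall>t u v.
            t \<in> {0..1} \<and> (\<forall>F\<in>feet A m. t \<notin> F) \<and> is_word A u \<and> is_word A v \<and>
            locally_reduced t u \<and> locally_reduced t v \<and> evalw t u = evalw t v
            \<longrightarrow> u = v)"
proof (intro conjI allI impI)
  fix x0 x1 u0 u1
  assume "x0 \<in> {0..1} \<and> x1 \<in> {0..1} \<and> is_word A u0 \<and> is_word A u1 \<and>
            locally_reduced x0 u0 \<and> locally_reduced x1 u1 \<and>
            x0 \<notin> src_word m u0 \<and> x1 \<notin> src_word m u1 \<and>
            length u0 \<le> length u1 \<and> evalw x0 u0 = evalw x1 u1"
  then show "\<exists>p. u1 = p @ u0"
    using locally_reduced_same_image_suffix[OF assms] by blast
next
  fix t u v
  assume "t \<in> {0..1} \<and> (\<forall>F\<in>feet A m. t \<notin> F) \<and> is_word A u \<and> is_word A v \<and>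
            locally_reduced t u \<and> locally_reduced t v \<and> evalw t u = evalw t v"
  then show "u = v"
    using locally_reduced_same_image_eq[OF assms, of t u v]
      locally_reduced_same_image_eq[OF assms, of t v u] by (cases "length u \<le> length v") auto
qed

end
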